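(* Let $K$ be a finite field of characteristic $p$ and order $q$, and let $s$ be a positive integer with $\gcd(s,q-1)=1$. For any $u\in K$ there exist unique nonnegative integers $w_0,\dots,w_{p-1}$ with $w_0>0$, $\sum_{i=0}^{p-1}w_i=q$ and $W_u=\sum_{i=0}^{p-1}w_i\zeta^i$. If $s$ is nondegenerate over $K$, then $w_i<q$ for every $i\in\{0,\dots,p-1\}$ and $|W_u|<q$.
   Context: $\zeta=\exp(2\pi i/p)$, $\psi(x)=\zeta^{\mathrm{Tr}(x)}$ with $\mathrm{Tr}$ the absolute trace of $K$ to $\mathbb{F}_p$; $W_u=\sum_{x\in K}\psi(x^s-ux)$. The exponent $s$ is degenerate over $K$ if $s\equiv p^k\pmod{q-1}$ for some integer $k$, and nondegenerate otherwise. *)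

theory Defs
  imports "HOL-Analysis.Analysis" "HOL-Computational_Algebra.Primes" "HOL-Number_Theory.Cong"
begin

definition abs_trace :: "'a::{field,finite} \<Rightarrow> 'a" where
  "abs_trace x = (\<Sum>i < multiplicity CHAR('a) CARD('a). x ^ (CHAR('a) ^ i))"

text \<open>The trace lies in the prime field F_p = {of_nat k | k < p}; tr_nat x is the
  representative k in {0..p-1}.\<close>
definition tr_nat :: "'a::{field,finite} \<Rightarrow> nat" where
  "tr_nat x = (THE k. k < CHAR('a) \<and> of_nat k = abs_trace x)"

definition zeta :: "nat \<Rightarrow> complex" where
  "zeta p = exp (2 * pi * \<i> / of_nat p)"

definition psi :: "'a::{field,finite} \<Rightarrow> complex" where
  "psi x = zeta CHAR('a) ^ tr_nat x"

definition Wsum :: "nat \<Rightarrow> 'a::{field,finite} \<Rightarrow> complex" where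
  "Wsum s u = (\<Sum>x\<in>(UNIV::'a set). psi (x ^ s - u * x))"

definition degenerate :: "'a::{field,finite} itself \<Rightarrow> nat \<Rightarrow> bool" where
  "degenerate T s \<longleftrightarrow> (\<exists>k. [s = CHAR('a) ^ k] (mod (CARD('a) - 1)))"

end

theory Submission
  imports Defs "HOL-Computational_Algebra.Polynomial_Factorial"
begin

text \<open>
  Grouping the terms of \<open>W\<^sub>u\<close> by the value \<open>i\<close> of \<open>Tr(x\<^sup>s - u x)\<close> writes
  \<open>W\<^sub>u = \<Sum> w\<^sub>i \<zeta>\<^sup>i\<close> with \<open>w\<^sub>i\<close> the size of the \<open>i\<close>-th fibre; so \<open>\<Sum> w\<^sub>i = q\<close>,
  and \<open>w\<^sub>0 > 0\<close> because of \<open>x = 0\<close>. The representation is unique: since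
  \<open>1 + X + \<dots> + X\<^bsup>p-1\<^esup>\<close> is irreducible over \<open>\<rat>\<close> (Eisenstein at \<open>X + 1\<close>),
  an integer relation \<open>\<Sum> d\<^sub>i \<zeta>\<^sup>i = 0\<close> forces all \<open>d\<^sub>i\<close> to be equal, and equal
  totals then force \<open>d = 0\<close>.

  For nondegenerate \<open>s\<close>, reducing exponents modulo \<open>q - 1\<close> turns \<open>Tr(x\<^sup>s - u x)\<close> into a
  polynomial in \<open>x\<close> of degree \<open>< q\<close> in which the monomial \<open>x\<^sup>s\<close> survives, so some
  \<open>x\<^sub>0\<close> has nonzero trace. Then no fibre is all of \<open>K\<close>, and the terms for \<open>0\<close> and
  \<open>x\<^sub>0\<close> are distinct unit vectors, whence \<open>|W\<^sub>u| < q\<close>.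
\<close>

section \<open>Finite fields\<close>

lemma CHAR_prime_finite_field: "prime CHAR('a::{field,finite})"
  by (rule prime_CHAR_semidom) (simp add: finite_imp_CHAR_pos)

lemma CHAR_ge_2_finite_field: "CHAR('a::{field,finite}) \<ge> 2"
  using CHAR_prime_finite_field prime_ge_2_nat by blast

lemma finite_field_power_card_minus_one:
  fixes x :: "'a::{field,finite}"
  assumes "x \<noteq> 0"
  shows "x ^ (CARD('a) - 1) = 1"
proof -
  let ?U = "UNIV - {0 :: 'a}"
  have card_U: "card ?U = CARD('a) - 1" by (simp add: card_Diff_subset)
  have "bij_betw ((*) x) ?U ?U"
    using assms by (intro bij_betwI[of _ _ _ "\<lambda>y. y / x"]) auto
  then have "\<Prod>?U = (\<Prod>y\<in>?U. x * y)"
    using prod.reindex_bij_betw[of "(*) x" ?U ?U "\<lambda>y. y"] by simp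
  also have "\<dots> = x ^ (CARD('a) - 1) * \<Prod>?U"
    by (simp add: prod.distrib card_U)
  finally show ?thesis
    using assms by (simp add: prod_zero_iff)
qed

lemma finite_field_power_card:
  fixes x :: "'a::{field,finite}"
  shows "x ^ CARD('a) = x"
proof (cases "x = 0")
  case False
  have "CARD('a) = Suc (CARD('a) - 1)"
    using finite_UNIV_card_ge_0[where 'a='a] by simp
  then have "x ^ CARD('a) = x * x ^ (CARD('a) - 1)"
    by (metis power_Suc)
  then show ?thesis
    using finite_field_power_card_minus_one[OF False] by simp
qed simp

lemma of_nat_mod_CHAR: "(of_nat (n mod CHAR('a)) :: 'a::semiring_1_cancel) = of_nat n"
  by (simp add: of_nat_eq_iff_cong_CHAR)

lemma finite_field_of_nat_invertible:
  assumes "0 < d" "d < CHAR('a::{field,finite})"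
  obtains e where "(of_nat d :: 'a) * of_nat e = 1"
proof -
  have "coprime d CHAR('a)"
    using assms CHAR_prime_finite_field[where 'a='a]
    by (metis coprime_commute nat_dvd_not_less prime_imp_coprime)
  then obtain e where "[d * e = 1] (mod CHAR('a))"
    using cong_solve_coprime_nat by fastforce
  then have "(of_nat (d * e) :: 'a) = of_nat 1"
    by (simp only: of_nat_eq_iff_cong_CHAR)
  then show thesis
    using that by simp
qed

text \<open>Towards \<open>q = p\<^sup>n\<close>: adjoining an element to an additive subgroup multiplies its size by \<open>p\<close>.\<close>

definition add_submonoid :: "'a::monoid_add set \<Rightarrow> bool" where
  "add_submonoid S \<longleftrightarrow> 0 \<in> S \<and> (\<forall>x\<in>S. \<forall>y\<in>S. x + y \<in> S)"

lemma add_submonoid_of_nat_mult: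
  "add_submonoid S \<Longrightarrow> x \<in> S \<Longrightarrow> of_nat k * x \<in> S"
  by (induction k) (auto simp: add_submonoid_def distrib_right)

text \<open>In characteristic \<open>p\<close>, \<open>-x = (p - 1) x\<close>, so additive submonoids are closed under subtraction.\<close>

lemma add_submonoid_diff:
  fixes S :: "'a::{field,finite} set"
  assumes S: "add_submonoid S" and "x \<in> S" "y \<in> S"
  shows "x - y \<in> S"
proof -
  have "of_nat (CHAR('a) - 1) * y + y = of_nat CHAR('a) * y"
    using CHAR_ge_2_finite_field[where 'a='a] by (simp add: distrib_right of_nat_diff)
  then have neg: "of_nat (CHAR('a) - 1) * y = - y"
    by (simp add: eq_neg_iff_add_eq_0)
  have "x + of_nat (CHAR('a) - 1) * y \<in> S"
    using assms add_submonoid_of_nat_mult[OF S \<open>y \<in> S\<close>] unfolding add_submonoid_def by blast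
  then show ?thesis
    by (metis neg diff_conv_add_uminus)
qed

lemma add_submonoid_extend:
  fixes S :: "'a::{field,finite} set"
  assumes S: "add_submonoid S" and x: "x \<notin> S"
  defines "S' \<equiv> (\<lambda>(s, j). s + of_nat j * x) ` (S \<times> {..<CHAR('a)})"
  shows "add_submonoid S'" and "card S' = CHAR('a) * card S"
proof -
  let ?p = "CHAR('a)"
  show "add_submonoid S'"
    unfolding add_submonoid_def
  proof safe
    show "0 \<in> S'"
      unfolding S'_def using S CHAR_ge_2_finite_field[where 'a='a]
      by (intro image_eqI[of _ _ "(0, 0)"]) (auto simp: add_submonoid_def)
  next
    fix a b assume "a \<in> S'" "b \<in> S'"
    then obtain s j s' j' where a: "a = s + of_nat j * x" "s \<in> S"
      and b: "b = s' + of_nat j' * x" "s' \<in> S"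
      unfolding S'_def by auto
    have "a + b = (s + s') + of_nat ((j + j') mod ?p) * x"
      unfolding a b of_nat_mod_CHAR by (simp add: algebra_simps)
    moreover have "s + s' \<in> S"
      using S a b by (auto simp: add_submonoid_def)
    ultimately show "a + b \<in> S'"
      unfolding S'_def using CHAR_ge_2_finite_field[where 'a='a] by force
  qed
  have no_collision: False
    if s: "s \<in> S" "s' \<in> S" and j: "j < j'" "j' < ?p"
      and eq: "s + of_nat j * x = s' + of_nat j' * x" for s s' j j'
  proof -
    have "0 < j' - j" "j' - j < ?p"
      using j by auto
    then obtain e where e: "(of_nat (j' - j) :: 'a) * of_nat e = 1"
      by (rule finite_field_of_nat_invertible)
    have "of_nat (j' - j) * x = s - s'"
      using j eq by (simp add: of_nat_diff algebra_simps)
    then have "of_nat e * (of_nat (j' - j) * x) \<in> S"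
      using add_submonoid_diff[OF S s] add_submonoid_of_nat_mult[OF S] by simp
    then show False
      using x e by (simp add: mult.assoc[symmetric] mult.commute[of "of_nat e"])
  qed
  have "inj_on (\<lambda>(s, j). s + of_nat j * x) (S \<times> {..<?p})"
  proof (rule inj_onI, clarify)
    fix s j s' j'
    assume "s \<in> S" "j < ?p" "s' \<in> S" "j' < ?p" "s + of_nat j * x = s' + of_nat j' * x"
    then show "s = s' \<and> j = j'"
      using no_collision[of s s' j j'] no_collision[of s' s j' j] by (cases j j' rule: linorder_cases) auto
  qed
  then show "card S' = ?p * card S"
    unfolding S'_def by (simp add: card_image card_cartesian_product)
qed

lemma add_submonoid_index_CHAR_power:
  fixes S :: "'a::{field,finite} set"
  assumes "add_submonoid S"
  shows "\<exists>m. CARD('a) = card S * CHAR('a) ^ m"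
  using assms
proof (induction "CARD('a) - card S" arbitrary: S rule: less_induct)
  case less
  show ?case
  proof (cases "S = UNIV")
    case True
    then show ?thesis by (intro exI[of _ 0]) simp
  next
    case False
    then obtain x where x: "x \<notin> S" by blast
    define S' where "S' = (\<lambda>(s, j). s + of_nat j * x) ` (S \<times> {..<CHAR('a)})"
    have S': "add_submonoid S'" "card S' = CHAR('a) * card S"
      using add_submonoid_extend[OF less.prems x] unfolding S'_def by auto
    have "card S > 0"
      using less.prems by (auto simp: add_submonoid_def card_gt_0_iff)
    then have "card S < card S'"
      using S'(2) CHAR_ge_2_finite_field[where 'a='a] by simp
    moreover have "card S' \<le> CARD('a)"
      by (simp add: card_mono)
    ultimately have "CARD('a) - card S' < CARD('a) - card S"
      by (simp add: diff_less_mono2)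
    then obtain m where "CARD('a) = card S' * CHAR('a) ^ m"
      using less.hyps S'(1) by blast
    then show ?thesis
      using S'(2) by (intro exI[of _ "Suc m"]) (simp add: ac_simps)
  qed
qed

abbreviation finite_field_degree :: "'a::{field,finite} itself \<Rightarrow> nat" where
  "finite_field_degree T \<equiv> multiplicity CHAR('a) CARD('a)"

lemma finite_field_card_eq:
  "CARD('a::{field,finite}) = CHAR('a) ^ finite_field_degree TYPE('a)"
proof -
  obtain m where "CARD('a) = CHAR('a) ^ m"
    using add_submonoid_index_CHAR_power[of "{0::'a}"] by (auto simp: add_submonoid_def)
  then show ?thesis
    using CHAR_prime_finite_field[where 'a='a] by simp
qed

lemma finite_field_degree_pos: "finite_field_degree TYPE('a::{field,finite}) > 0"
proof (rule ccontr)
  assume "\<not> ?thesis"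
  then have "CARD('a) = 1"
    using finite_field_card_eq[where 'a='a] by simp
  moreover have "card {0::'a, 1} \<le> CARD('a)"
    by (rule card_mono) auto
  ultimately show False by simp
qed

section \<open>The absolute trace\<close>

lemma finite_field_power_card_power:
  "(x::'a::{field,finite}) ^ (CHAR('a) ^ finite_field_degree TYPE('a)) = x"
  using finite_field_power_card[of x] finite_field_card_eq[where 'a='a] by simp

lemma frobenius_power_diff:
  "((x::'a::{field,finite}) - y) ^ (CHAR('a) ^ i) = x ^ (CHAR('a) ^ i) - y ^ (CHAR('a) ^ i)"
  using freshmans_dream'[OF CHAR_prime_finite_field refl, where x = "x - y" and y = y and n = i]
  by (simp add: eq_diff_eq)

lemma of_nat_power_CHAR: "(of_nat k :: 'a::{field,finite}) ^ CHAR('a) = of_nat k"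
proof (induction k)
  case (Suc k)
  have "(1 + of_nat k :: 'a) ^ CHAR('a) = 1 ^ CHAR('a) + of_nat k ^ CHAR('a)"
    by (rule freshmans_dream) (simp_all add: CHAR_prime_finite_field)
  then show ?case
    using Suc by simp
qed (use CHAR_ge_2_finite_field[where 'a='a] in simp)

lemma inj_on_of_nat_CHAR: "inj_on (of_nat :: nat \<Rightarrow> 'a::semiring_1_cancel) {..<CHAR('a)}"
  by (rule inj_onI) (auto simp: of_nat_eq_iff_cong_CHAR intro: cong_less_modulus_unique_nat)

text \<open>The \<open>p\<close> elements of the prime field already exhaust the at most \<open>p\<close> roots of \<open>X\<^sup>p - X\<close>.\<close>

lemma power_CHAR_eq_self_imp_of_nat:
  fixes y :: "'a::{field,finite}"
  assumes "y ^ CHAR('a) = y"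
  shows "\<exists>k<CHAR('a). y = of_nat k"
proof -
  let ?p = "CHAR('a)"
  define P where "P = monom (1::'a) ?p - monom 1 1"
  have p2: "?p \<ge> 2"
    by (rule CHAR_ge_2_finite_field)
  then have "coeff P ?p = 1"
    by (simp add: P_def)
  then have "P \<noteq> 0"
    by auto
  moreover have "degree P \<le> ?p"
    unfolding P_def using p2 by (intro degree_le) auto
  moreover have roots: "{y. poly P y = 0} = {y. y ^ ?p = y}"
    by (simp add: P_def poly_monom)
  ultimately have card_roots: "card {y::'a. y ^ ?p = y} \<le> ?p"
    using card_poly_roots_bound[of P] by simp
  have sub: "of_nat ` {..<?p} \<subseteq> {y::'a. y ^ ?p = y}"
    using of_nat_power_CHAR by auto
  have "card (of_nat ` {..<?p} :: 'a set) = ?p"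
    using card_image[OF inj_on_of_nat_CHAR] by simp
  then have "of_nat ` {..<?p} = {y::'a. y ^ ?p = y}"
    using card_subset_eq[OF _ sub] card_roots card_mono[OF _ sub] by simp
  then show ?thesis
    using assms by auto
qed

lemma abs_trace_diff: "abs_trace ((x::'a::{field,finite}) - y) = abs_trace x - abs_trace y"
  unfolding abs_trace_def by (simp add: frobenius_power_diff sum_subtractf)

lemma abs_trace_power_CHAR: "abs_trace (x::'a::{field,finite}) ^ CHAR('a) = abs_trace x"
proof -
  let ?n = "finite_field_degree TYPE('a)" and ?p = "CHAR('a)"
  define f where "f i = x ^ (?p ^ i)" for i
  have "abs_trace x ^ ?p = (\<Sum>i<?n. f i ^ ?p)"
    unfolding abs_trace_def f_def by (rule freshmans_dream_sum) (simp_all add: CHAR_prime_finite_field)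
  also have "\<dots> = (\<Sum>i<?n. f (Suc i))"
    by (simp add: f_def power_mult[symmetric] mult.commute)
  also have "\<dots> = (\<Sum>i<?n. f i)"
    using sum.lessThan_Suc_shift[of f ?n] sum.lessThan_Suc[of f ?n] finite_field_power_card_power[of x]
    by (simp add: f_def)
  finally show ?thesis
    by (simp add: abs_trace_def f_def)
qed

lemma tr_nat_spec:
  fixes x :: "'a::{field,finite}"
  shows "tr_nat x < CHAR('a) \<and> of_nat (tr_nat x) = abs_trace x"
proof -
  obtain k where "k < CHAR('a)" "abs_trace x = of_nat k"
    using power_CHAR_eq_self_imp_of_nat[OF abs_trace_power_CHAR] by blast
  then have "\<exists>!k. k < CHAR('a) \<and> (of_nat k :: 'a) = abs_trace x"
    using inj_on_of_nat_CHAR[where 'a='a] by (auto simp: inj_on_def)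
  then show ?thesis
    unfolding tr_nat_def by (rule theI')
qed

lemmas tr_nat_less_CHAR = tr_nat_spec[THEN conjunct1]

lemma tr_nat_eq_0_iff: "tr_nat (x::'a::{field,finite}) = 0 \<longleftrightarrow> abs_trace x = 0"
  using tr_nat_spec[of x] inj_on_of_nat_CHAR[where 'a='a] CHAR_ge_2_finite_field[where 'a='a]
  by (auto simp: inj_on_def simp del: of_nat_eq_0_iff_char_dvd)

lemma tr_nat_0: "tr_nat (0::'a::{field,finite}) = 0"
  using abs_trace_diff[of "0::'a" 0] by (simp add: tr_nat_eq_0_iff)

section \<open>Nondegenerate exponents\<close>

lemma poly_eq_0_if_vanishes_on_finite_field:
  fixes P :: "'a::{field,finite} poly"
  assumes "degree P < CARD('a)" and "\<And>x. poly P x = 0"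
  shows "P = 0"
proof (rule ccontr)
  assume "P \<noteq> 0"
  then have "card {x. poly P x = 0} \<le> degree P"
    by (rule card_poly_roots_bound)
  then show False
    using assms by simp
qed

lemma card_ge_3_if_nondegenerate:
  assumes "\<not> degenerate TYPE('a::{field,finite}) s"
  shows "CARD('a) \<ge> 3"
proof -
  have "CARD('a) \<noteq> 2"
  proof
    assume "CARD('a) = 2"
    then have "[s = CHAR('a) ^ 0] (mod (CARD('a) - 1))"
      by (simp add: cong_def)
    then show False
      using assms unfolding degenerate_def by blast
  qed
  moreover have "card {0::'a, 1} \<le> CARD('a)"
    by (rule card_mono) auto
  ultimately show ?thesis
    by simp
qed

lemma CHAR_power_less_card_minus_one:
  assumes "CARD('a::{field,finite}) \<ge> 3" and "i < finite_field_degree TYPE('a)"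
  shows "CHAR('a) ^ i < CARD('a) - 1"
proof -
  let ?p = "CHAR('a)" and ?n = "finite_field_degree TYPE('a)"
  have "?p ^ i * 2 \<le> ?p ^ (?n - 1) * ?p"
    using assms(2) CHAR_ge_2_finite_field[where 'a='a] by (intro mult_mono power_increasing) auto
  also have "\<dots> = CARD('a)"
    using assms(2) finite_field_card_eq[where 'a='a] by (simp flip: power_Suc2)
  finally show ?thesis
    using assms(1) by linarith
qed

definition reduce_exponent :: "nat \<Rightarrow> nat \<Rightarrow> nat" where
  "reduce_exponent N m = (m - 1) mod N + 1"

lemma finite_field_power_reduce_exponent:
  fixes x :: "'a::{field,finite}"
  assumes "m \<ge> 1"
  shows "x ^ m = x ^ reduce_exponent (CARD('a) - 1) m"
proof (cases "x = 0")
  case False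
  let ?N = "CARD('a) - 1"
  have "m = reduce_exponent ?N m + ?N * ((m - 1) div ?N)"
    using assms by (simp add: reduce_exponent_def)
  then have "x ^ m = x ^ reduce_exponent ?N m * (x ^ ?N) ^ ((m - 1) div ?N)"
    by (metis power_add power_mult)
  then show ?thesis
    using finite_field_power_card_minus_one[OF False] by simp
qed (use assms in \<open>simp add: reduce_exponent_def\<close>)

lemma reduce_exponent_eq_iff:
  assumes "a \<ge> 1" "b \<ge> 1"
  shows "reduce_exponent N a = reduce_exponent N b \<longleftrightarrow> [a = b] (mod N)"
proof -
  have "[a = b] (mod N) \<longleftrightarrow> [(a - 1) + 1 = (b - 1) + 1] (mod N)"
    using assms by simp
  also have "\<dots> \<longleftrightarrow> [a - 1 = b - 1] (mod N)"
    by (rule cong_add_rcancel_nat)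
  finally show ?thesis
    by (simp add: reduce_exponent_def cong_def)
qed

lemma reduce_exponent_le: "N > 0 \<Longrightarrow> reduce_exponent N m \<le> N"
  by (simp add: reduce_exponent_def Suc_leI)

lemma reduce_exponent_eq_self: "1 \<le> m \<Longrightarrow> m \<le> N \<Longrightarrow> reduce_exponent N m = m"
  by (simp add: reduce_exponent_def)

definition trace_poly :: "nat \<Rightarrow> 'a::{field,finite} \<Rightarrow> 'a poly" where
  "trace_poly s u =
     (\<Sum>i<finite_field_degree TYPE('a). monom 1 (reduce_exponent (CARD('a) - 1) (s * CHAR('a) ^ i)))
     - (\<Sum>i<finite_field_degree TYPE('a). monom (u ^ (CHAR('a) ^ i)) (CHAR('a) ^ i))"

lemma poly_trace_poly:
  fixes u :: "'a::{field,finite}"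
  assumes "s > 0"
  shows "poly (trace_poly s u) x = abs_trace (x ^ s - u * x)"
proof -
  have pos: "s * CHAR('a) ^ i \<ge> 1" for i
    using assms CHAR_ge_2_finite_field[where 'a='a] by (simp add: Suc_le_eq)
  have "x ^ reduce_exponent (CARD('a) - 1) (s * CHAR('a) ^ i) = (x ^ s) ^ (CHAR('a) ^ i)" for i
    using finite_field_power_reduce_exponent[OF pos[of i], of x] by (simp add: power_mult)
  then have "poly (trace_poly s u) x = abs_trace (x ^ s) - abs_trace (u * x)"
    by (simp add: trace_poly_def abs_trace_def poly_sum poly_monom power_mult_distrib)
  then show ?thesis
    by (simp add: abs_trace_diff)
qed

lemma degree_trace_poly_less:
  assumes "CARD('a::{field,finite}) \<ge> 3"
  shows "degree (trace_poly s (u::'a)) < CARD('a)"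
proof -
  have "reduce_exponent (CARD('a) - 1) m \<le> CARD('a) - 1" for m
    using assms by (intro reduce_exponent_le) simp
  then have "degree (trace_poly s u) \<le> CARD('a) - 1"
    unfolding trace_poly_def using CHAR_power_less_card_minus_one[OF assms]
    by (intro degree_diff_le degree_sum_le) (auto intro: order.trans[OF degree_monom_le] less_imp_le)
  then show ?thesis
    using assms by simp
qed

text \<open>Non-degeneracy is exactly what keeps the monomial \<open>x\<^sup>s\<close> from cancelling.\<close>

lemma coeff_trace_poly_reduce_exponent:
  fixes u :: "'a::{field,finite}"
  assumes s: "s > 0" and coprime: "coprime s (CARD('a) - 1)"
    and nondeg: "\<not> degenerate TYPE('a) s"
  shows "coeff (trace_poly s u) (reduce_exponent (CARD('a) - 1) s) = 1"
proof -
  let ?p = "CHAR('a)" and ?n = "finite_field_degree TYPE('a)" and ?N = "CARD('a) - 1"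
  have q3: "CARD('a) \<ge> 3"
    using nondeg by (rule card_ge_3_if_nondegenerate)
  have pos: "s * ?p ^ i \<ge> 1" "?p ^ i \<ge> 1" for i
    using s CHAR_ge_2_finite_field[where 'a='a] by (simp_all add: Suc_le_eq)
  have frobenius_exponent: "reduce_exponent ?N (s * ?p ^ i) = reduce_exponent ?N s \<longleftrightarrow> i = 0"
    if "i < ?n" for i
  proof -
    have "reduce_exponent ?N (s * ?p ^ i) = reduce_exponent ?N s \<longleftrightarrow> [s * ?p ^ i = s * 1] (mod ?N)"
      using reduce_exponent_eq_iff[OF pos(1) pos(1)[of 0]] by simp
    also have "\<dots> \<longleftrightarrow> [?p ^ i = 1] (mod ?N)"
      using coprime by (rule cong_mult_lcancel_nat)
    also have "\<dots> \<longleftrightarrow> ?p ^ i = 1"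
      using CHAR_power_less_card_minus_one[OF q3 that] q3 by (simp add: cong_def)
    also have "\<dots> \<longleftrightarrow> i = 0"
      using CHAR_ge_2_finite_field[where 'a='a] by simp
    finally show ?thesis .
  qed
  have linear_exponent: "?p ^ i \<noteq> reduce_exponent ?N s" if "i < ?n" for i
  proof
    assume eq: "?p ^ i = reduce_exponent ?N s"
    have "reduce_exponent ?N (?p ^ i) = ?p ^ i"
      using reduce_exponent_eq_self[OF pos(2)] CHAR_power_less_card_minus_one[OF q3 that] by simp
    then have "reduce_exponent ?N (?p ^ i) = reduce_exponent ?N s"
      using eq by (rule trans)
    then have "[s = ?p ^ i] (mod ?N)"
      using reduce_exponent_eq_iff[OF pos(2) pos(1)[of 0]] by (simp add: cong_sym_eq)
    then show False
      using nondeg unfolding degenerate_def by blast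
  qed
  show ?thesis
    using frobenius_exponent linear_exponent finite_field_degree_pos[where 'a='a]
    by (simp add: trace_poly_def coeff_sum coeff_monom sum.delta' del: One_nat_def)
qed

lemma exists_abs_trace_nonzero:
  fixes u :: "'a::{field,finite}"
  assumes "s > 0" and "coprime s (CARD('a) - 1)" and nondeg: "\<not> degenerate TYPE('a) s"
  shows "\<exists>x. abs_trace (x ^ s - u * x) \<noteq> 0"
proof -
  have "trace_poly s u \<noteq> 0"
    using coeff_trace_poly_reduce_exponent[OF assms, of u] by auto
  moreover have "degree (trace_poly s u) < CARD('a)"
    using card_ge_3_if_nondegenerate[OF nondeg] by (rule degree_trace_poly_less)
  ultimately show ?thesis
    using poly_eq_0_if_vanishes_on_finite_field poly_trace_poly[OF \<open>s > 0\<close>] by metis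
qed

section \<open>Integer relations among \<open>p\<close>-th roots of unity\<close>

lemma eisenstein_coprime_factor_const:
  fixes F G H :: "'a::idom poly"
  assumes q: "prime_elem q" and FGH: "F = G * H" and lc: "\<not> q dvd lead_coeff F"
    and dvd_coeff: "\<And>k. k < degree F \<Longrightarrow> q dvd coeff F k"
    and G0: "q dvd coeff G 0" and H0: "\<not> q dvd coeff H 0"
  shows "degree H = 0"
proof (rule ccontr)
  assume deg_H: "degree H \<noteq> 0"
  have "F \<noteq> 0"
    using lc by auto
  then have "G \<noteq> 0" "H \<noteq> 0"
    using FGH by auto
  then have deg_F: "degree F = degree G + degree H"
    using FGH by (simp add: degree_mult_eq)
  have "\<not> q dvd lead_coeff G"
    using lc FGH by (auto simp: lead_coeff_mult)
  define k where "k = (LEAST k. \<not> q dvd coeff G k)"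
  have k: "\<not> q dvd coeff G k"
    unfolding k_def using \<open>\<not> q dvd lead_coeff G\<close> by (rule LeastI)
  have below_k: "q dvd coeff G i" if "i < k" for i
    using that not_less_Least unfolding k_def by blast
  have "k \<le> degree G"
    using \<open>\<not> q dvd lead_coeff G\<close> below_k not_le by blast
  then have "q dvd coeff F k"
    using deg_F deg_H by (intro dvd_coeff) linarith
  moreover have "coeff F k = coeff G k * coeff H 0 + (\<Sum>i<k. coeff G i * coeff H (k - i))"
    using FGH by (simp add: coeff_mult lessThan_Suc_atMost[symmetric])
  moreover have "q dvd (\<Sum>i<k. coeff G i * coeff H (k - i))"
    by (intro dvd_sum) (simp add: below_k)
  ultimately have "q dvd coeff G k * coeff H 0"
    by (metis dvd_add_left_iff)
  then show False
    using q k H0 by (simp add: prime_elem_dvd_mult_iff)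
qed

theorem eisenstein_criterion:
  fixes F G H :: "'a::idom poly"
  assumes q: "prime_elem q" and FGH: "F = G * H" and lc: "\<not> q dvd lead_coeff F"
    and dvd_coeff: "\<And>k. k < degree F \<Longrightarrow> q dvd coeff F k"
    and not_sq_dvd: "\<not> q ^ 2 dvd coeff F 0"
  shows "degree G = 0 \<or> degree H = 0"
proof (cases "degree F = 0")
  case True
  have "G \<noteq> 0" "H \<noteq> 0"
    using FGH lc by auto
  then show ?thesis
    using True FGH by (simp add: degree_mult_eq)
next
  case False
  have F0: "coeff F 0 = coeff G 0 * coeff H 0"
    using FGH by (simp add: coeff_mult)
  then have "q dvd coeff G 0 * coeff H 0"
    using dvd_coeff[of 0] False by simp
  then consider "q dvd coeff G 0" "\<not> q dvd coeff H 0" | "q dvd coeff H 0" "\<not> q dvd coeff G 0"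
    using q not_sq_dvd F0 by (metis mult_dvd_mono power2_eq_square prime_elem_dvd_mult_iff)
  then show ?thesis
  proof cases
    case 1
    then show ?thesis
      by (intro disjI2 eisenstein_coprime_factor_const[OF q FGH lc]) (use dvd_coeff in auto)
  next
    case 2
    have "F = H * G"
      using FGH by (simp add: mult.commute)
    with 2 show ?thesis
      by (intro disjI1 eisenstein_coprime_factor_const[OF q _ lc]) (use dvd_coeff in auto)
  qed
qed

(* For prime p, geom_poly p is the p-th cyclotomic polynomial. *)
definition geom_poly :: "nat \<Rightarrow> 'a::comm_ring_1 poly" where
  "geom_poly n = (\<Sum>i<n. [:0, 1:] ^ i)"

lemma coeff_geom_poly: "coeff (geom_poly n) i = (if i < n then 1 else 0)"
  unfolding geom_poly_def by (simp add: coeff_sum monom_altdef[of 1, simplified, symmetric])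

lemma degree_geom_poly: "n > 0 \<Longrightarrow> degree (geom_poly n) = n - 1"
  by (intro antisym degree_le le_degree) (auto simp: coeff_geom_poly)

lemma lead_coeff_geom_poly: "n > 0 \<Longrightarrow> lead_coeff (geom_poly n) = 1"
  by (simp add: degree_geom_poly coeff_geom_poly)

lemma poly_geom_poly_root_of_unity:
  assumes "z ^ n = 1" "z \<noteq> 1"
  shows "poly (geom_poly n) (z :: 'a::idom) = 0"
proof -
  have "(z - 1) * poly (geom_poly n) z = z ^ n - 1"
    by (simp add: geom_poly_def poly_sum power_diff_1_eq)
  then show ?thesis
    using assms by simp
qed

lemma pcompose_power_left: "pcompose (p ^ n) q = pcompose p q ^ n"
  by (induction n) (simp_all add: pcompose_mult pcompose_1)

lemma coeff_geom_poly_shift: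
  assumes "k < n"
  shows "coeff (pcompose (geom_poly n) [:1, 1:]) k = of_nat (n choose (k + 1))"
proof -
  have "[:0, 1:] * pcompose (geom_poly n) [:1, 1:] = pcompose (([:0, 1:] - 1) * geom_poly n) [:1, 1:]"
    by (simp add: pcompose_mult pcompose_diff pcompose_pCons one_pCons)
  also have "\<dots> = [:1, 1:] ^ n - 1"
    by (simp add: geom_poly_def power_diff_1_eq[symmetric] pcompose_diff pcompose_power_left
        pcompose_pCons pcompose_1)
  moreover have "coeff ([:0, 1:] * Q) (Suc k) = coeff Q k" for Q :: "'a poly"
    by simp
  ultimately have "coeff (pcompose (geom_poly n) [:1, 1:]) k = coeff ([:1, 1:] ^ n - 1 :: 'a poly) (Suc k)"
    by metis
  then show ?thesis
    using assms by (simp add: coeff_linear_poly_power)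
qed

lemma irreducible_geom_poly:
  assumes p: "prime p"
  shows "irreducible (geom_poly p :: int poly)"
proof -
  have p2: "p \<ge> 2"
    using p prime_ge_2_nat by blast
  define F :: "int poly" where "F = pcompose (geom_poly p) [:1, 1:]"
  have deg_F: "degree F = p - 1"
    unfolding F_def using p2 by (simp add: degree_pcompose degree_geom_poly)
  have coeff_F: "coeff F k = int (p choose (k + 1))" if "k < p" for k
    unfolding F_def using that by (rule coeff_geom_poly_shift)
  have lc_F: "lead_coeff F = 1"
    using deg_F coeff_F[of "p - 1"] p2 by simp
  have dvd_coeff: "int p dvd coeff F k" if "k < degree F" for k
  proof -
    have "p dvd (p choose (k + 1))"
      using that deg_F p by (intro dvd_choose_prime) auto
    then show ?thesis
      using that deg_F coeff_F[of k] by simp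
  qed
  have not_sq_dvd: "\<not> (int p) ^ 2 dvd coeff F 0"
    using coeff_F[of 0] p2 by (simp add: power2_eq_square)
  have p_prime: "prime_elem (int p)"
    using p by simp
  show ?thesis
  proof (rule irreducibleI)
    have deg: "degree (geom_poly p :: int poly) \<noteq> 0"
      using degree_geom_poly[of p, where 'a=int] p2 by simp
    then show "geom_poly p \<noteq> (0 :: int poly)"
      by auto
    show "\<not> geom_poly p dvd (1 :: int poly)"
    proof
      assume "geom_poly p dvd (1 :: int poly)"
      then obtain c where "geom_poly p = ([:c:] :: int poly)"
        by (auto simp: is_unit_poly_iff)
      then show False
        using deg by simp
    qed
  next
    fix g h :: "int poly"
    assume gh: "geom_poly p = g * h"
    then have "F = pcompose g [:1, 1:] * pcompose h [:1, 1:]"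
      unfolding F_def by (simp add: pcompose_mult)
    from eisenstein_criterion[OF p_prime this _ dvd_coeff not_sq_dvd] lc_F p2
    have "degree g = 0 \<or> degree h = 0"
      by (simp add: degree_pcompose)
    moreover have "lead_coeff g * lead_coeff h = 1"
      using gh lead_coeff_geom_poly[of p, where 'a=int] p2 by (simp add: lead_coeff_mult)
    ultimately show "g dvd 1 \<or> h dvd 1"
      by (auto elim!: degree_eq_zeroE simp: is_unit_poly_iff zmult_eq_1_iff)
  qed
qed

lemma fract_poly_clear_denominators:
  fixes P :: "'a::{factorial_semiring,semiring_Gcd,ring_gcd,idom_divide,
                  semiring_gcd_mult_normalize} fract poly"
  obtains c Q where "c \<noteq> 0" and "smult (to_fract c) P = fract_poly Q"
proof -
  obtain d P' where P: "P = smult d (fract_poly P')"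
    by (rule content_decompose_fract)
  define a b where "a = fst (quot_of_fract d)" and "b = snd (quot_of_fract d)"
  have "b \<noteq> 0" and d: "d = to_fract a / to_fract b"
    unfolding a_def b_def by (simp_all flip: Fract_conv_to_fract)
  then have "smult (to_fract b) P = fract_poly (smult a P')"
    unfolding P by simp
  then show thesis
    using \<open>b \<noteq> 0\<close> that by blast
qed

text \<open>The ideal generated by \<open>a\<close> and \<open>b\<close> is principal, generated by an element of least degree.\<close>

lemma field_poly_bezout_if_irreducible_not_dvd:
  fixes a b :: "'a::field poly"
  assumes irr: "irreducible a" and not_dvd: "\<not> a dvd b"
  obtains A B where "A * a + B * b = 1"
proof -
  define S where "S = {A * a + B * b | A B. True}"
  have "a = 1 * a + 0 * b" "b = 0 * a + 1 * b"
    by simp_all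
  then have "a \<in> S" "b \<in> S"
    unfolding S_def by blast+
  moreover have "a \<noteq> 0"
    using irr by auto
  ultimately obtain M where M: "M \<in> S" "M \<noteq> 0"
    and least: "\<And>N. N \<in> S \<Longrightarrow> N \<noteq> 0 \<Longrightarrow> degree M \<le> degree N"
    using ex_has_least_nat[of "\<lambda>M. M \<in> S \<and> M \<noteq> 0" a degree] by blast
  obtain A B where AB: "M = A * a + B * b"
    using M(1) unfolding S_def by blast
  have M_dvd: "M dvd N" if "N \<in> S" for N
  proof (rule ccontr)
    assume "\<not> M dvd N"
    then have "N mod M \<noteq> 0"
      by (simp add: mod_eq_0_iff_dvd)
    obtain A' B' where N: "N = A' * a + B' * b"
      using \<open>N \<in> S\<close> unfolding S_def by blast
    have "N mod M = N - (N div M) * M"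
      by (simp add: minus_div_mult_eq_mod)
    also have "\<dots> = (A' - (N div M) * A) * a + (B' - (N div M) * B) * b"
      by (simp add: N AB algebra_simps)
    finally have "N mod M \<in> S"
      unfolding S_def by blast
    then have "degree M \<le> degree (N mod M)"
      using least \<open>N mod M \<noteq> 0\<close> by blast
    then show False
      using degree_mod_less[of M N] M(2) \<open>N mod M \<noteq> 0\<close> by simp
  qed
  obtain e where e: "a = M * e"
    using M_dvd[OF \<open>a \<in> S\<close>] by (elim dvdE)
  have "\<not> is_unit e"
  proof
    assume "is_unit e"
    then have "a dvd M"
      using e by (simp add: mult_unit_dvd_iff)
    then show False
      using not_dvd M_dvd[OF \<open>b \<in> S\<close>] dvd_trans by blast
  qed
  with irreducibleD[OF irr e] have "is_unit M"
    by blast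
  then obtain c where c: "M = [:c:]" "c \<noteq> 0"
    using M(2) by (auto simp: is_unit_poly_iff)
  have "smult (inverse c) A * a + smult (inverse c) B * b = smult (inverse c) M"
    by (simp add: AB smult_add_right)
  also have "\<dots> = 1"
    using c by (simp add: one_pCons)
  finally show thesis
    by (rule that)
qed

lemma map_poly_of_int_add:
  "map_poly (of_int :: int \<Rightarrow> 'a::comm_ring_1) (X + Y) = map_poly of_int X + map_poly of_int Y"
  by (intro poly_eqI) (simp add: coeff_map_poly)

lemma map_poly_of_int_mult:
  "map_poly (of_int :: int \<Rightarrow> 'a::comm_ring_1) (X * Y) = map_poly of_int X * map_poly of_int Y"
  by (intro poly_eqI) (simp add: coeff_map_poly coeff_mult)

text \<open>
  Gauss's lemma reduces this to \<open>\<rat>[X]\<close>, where a B\'ezout identity \<open>A F + B D = 1\<close>,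
  after clearing denominators, would evaluate to a nonzero integer at the common root.
\<close>

lemma irreducible_int_poly_dvd_if_common_root:
  fixes F D :: "int poly" and z :: "'a::{idom,ring_char_0}"
  assumes irr: "irreducible F" and deg: "degree F \<noteq> 0"
    and root_F: "poly (map_poly of_int F) z = 0" and root_D: "poly (map_poly of_int D) z = 0"
  shows "F dvd D"
proof -
  have "irreducible (fract_poly F)" "content F = 1"
    using irr deg nonconst_poly_irreducible_iff by blast+
  have "fract_poly F dvd fract_poly D"
  proof (rule ccontr)
    assume "\<not> ?thesis"
    with \<open>irreducible (fract_poly F)\<close> obtain A B where AB: "A * fract_poly F + B * fract_poly D = 1"
      by (rule field_poly_bezout_if_irreducible_not_dvd)
    obtain a A' where A: "a \<noteq> 0" "smult (to_fract a) A = fract_poly A'"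
      by (rule fract_poly_clear_denominators)
    obtain b B' where B: "b \<noteq> 0" "smult (to_fract b) B = fract_poly B'"
      by (rule fract_poly_clear_denominators)
    have "fract_poly (smult b A' * F + smult a B' * D)
        = smult (to_fract (a * b)) (A * fract_poly F + B * fract_poly D)"
      by (simp flip: A(2) B(2) add: smult_add_right mult_ac)
    also have "\<dots> = fract_poly [:a * b:]"
      unfolding AB by (simp add: map_poly_pCons)
    finally have "smult b A' * F + smult a B' * D = [:a * b:]"
      by (simp only: fract_poly_eq_iff)
    then have "poly (map_poly of_int (smult b A' * F + smult a B' * D)) z = (of_int (a * b) :: 'a)"
      by (simp add: map_poly_pCons)
    then show False
      using root_F root_D A(1) B(1) by (simp add: map_poly_of_int_add map_poly_of_int_mult map_poly_smult)
  qed
  then show ?thesis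
    using \<open>content F = 1\<close> by (rule fract_poly_dvdD)
qed

lemma map_poly_of_int_geom_poly: "map_poly of_int (geom_poly n) = (geom_poly n :: 'a::comm_ring_1 poly)"
  by (intro poly_eqI) (simp add: coeff_map_poly coeff_geom_poly)

theorem root_of_unity_int_relation_const:
  fixes z :: "'a::{idom,ring_char_0}" and d :: "nat \<Rightarrow> int"
  assumes p: "prime p" and z: "z ^ p = 1" "z \<noteq> 1"
    and rel: "(\<Sum>i<p. of_int (d i) * z ^ i) = 0" and "i < p"
  shows "d i = d 0"
proof -
  have p2: "p \<ge> 2"
    using p prime_ge_2_nat by blast
  define D where "D = (\<Sum>i<p. monom (d i) i)"
  have coeff_D: "coeff D i = (if i < p then d i else 0)" for i
    unfolding D_def by (simp add: coeff_sum)
  have "map_poly of_int D = (\<Sum>i<p. monom (of_int (d i)) i :: 'a poly)"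
    by (intro poly_eqI) (simp add: coeff_map_poly coeff_D coeff_sum)
  then have "poly (map_poly of_int D) z = 0"
    using rel by (simp add: poly_sum poly_monom)
  moreover have "poly (map_poly of_int (geom_poly p)) z = 0"
    using z by (simp add: map_poly_of_int_geom_poly poly_geom_poly_root_of_unity)
  ultimately have "geom_poly p dvd D"
    using irreducible_geom_poly[OF p] degree_geom_poly[of p, where 'a=int] p2
    by (intro irreducible_int_poly_dvd_if_common_root) auto
  then obtain R where R: "D = geom_poly p * R"
    by (elim dvdE)
  have "degree D \<le> p - 1"
    by (rule degree_le) (auto simp: coeff_D)
  moreover have "geom_poly p \<noteq> (0 :: int poly)"
    using lead_coeff_geom_poly[of p, where 'a=int] p2 by auto
  ultimately have "degree R = 0"
    using R degree_geom_poly[of p, where 'a=int] p2 by (cases "R = 0") (auto simp: degree_mult_eq)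
  then obtain r where "R = [:r:]"
    by (elim degree_eq_zeroE)
  then have "coeff D j = r" if "j < p" for j
    using R that by (simp add: coeff_geom_poly)
  then show ?thesis
    using coeff_D \<open>i < p\<close> p2 by (metis not_gr0 not_numeral_le_zero)
qed

section \<open>The character sum\<close>

lemma zeta_power: "zeta p ^ k = exp (2 * of_real pi * \<i> * of_nat k / of_nat p)"
  unfolding zeta_def by (simp add: exp_of_nat_mult[symmetric] mult_ac)

lemma zeta_power_eq_1_iff: "p > 0 \<Longrightarrow> zeta p ^ k = 1 \<longleftrightarrow> p dvd k"
  unfolding zeta_power by (simp add: complex_root_unity_eq_1)

lemma norm_zeta_power [simp]: "norm (zeta p ^ k) = 1"
  unfolding zeta_power by (simp add: norm_exp)

lemma sum_comp_eq_sum_card_fibres: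
  assumes "finite A" "finite B" "f ` A \<subseteq> B"
  shows "(\<Sum>x\<in>A. g (f x)) = (\<Sum>b\<in>B. of_nat (card {x\<in>A. f x = b}) * g b)"
proof -
  have "(\<Sum>x\<in>A. g (f x)) = (\<Sum>b\<in>B. \<Sum>x\<in>{x\<in>A. f x = b}. g (f x))"
    using assms by (rule sum.group[symmetric])
  also have "\<dots> = (\<Sum>b\<in>B. of_nat (card {x\<in>A. f x = b}) * g b)"
    by (intro sum.cong refl) simp
  finally show ?thesis .
qed

lemma norm_sum_unit_less_card:
  fixes f :: "'b \<Rightarrow> 'a::real_inner"
  assumes "finite A" "\<And>x. x \<in> A \<Longrightarrow> norm (f x) = 1"
    and "a \<in> A" "b \<in> A" "f a \<noteq> f b"
  shows "norm (\<Sum>x\<in>A. f x) < card A"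
proof -
  have "a \<noteq> b"
    using assms(5) by blast
  have "norm (f a + f b) \<noteq> norm (f a) + norm (f b)"
    using assms by (subst norm_triangle_eq) simp
  then have ab: "norm (f a + f b) < 2"
    using norm_triangle_ineq[of "f a" "f b"] assms by simp
  have rest: "norm (\<Sum>x\<in>A - {a, b}. f x) \<le> card (A - {a, b})"
    using norm_sum[of f "A - {a, b}"] assms(2) by simp
  have card_A: "card A = card (A - {a, b}) + 2"
    using card_Diff_subset[of "{a, b}" A] card_mono[of A "{a, b}"] assms \<open>a \<noteq> b\<close> by simp
  have "(\<Sum>x\<in>A. f x) = (\<Sum>x\<in>A - {a, b}. f x) + (f a + f b)"
    using sum.subset_diff[of "{a, b}" A f] assms \<open>a \<noteq> b\<close> by simp
  then have "norm (\<Sum>x\<in>A. f x) \<le> norm (\<Sum>x\<in>A - {a, b}. f x) + norm (f a + f b)"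
    by (simp add: norm_triangle_ineq)
  also have "\<dots> < card (A - {a, b}) + 2"
    using ab rest by linarith
  also have "\<dots> = card A"
    unfolding card_A by simp
  finally show ?thesis .
qed

lemma nat_list_eq_if_same_sum_and_zeta_combination:
  fixes w w' :: "nat list"
  assumes p: "prime p" and len: "length w = p" "length w' = p"
    and sum: "sum_list w = sum_list w'"
    and comb: "(\<Sum>i<p. of_nat (w ! i) * zeta p ^ i) = (\<Sum>i<p. of_nat (w' ! i) * zeta p ^ i)"
  shows "w = w'"
proof -
  have p0: "p > 0"
    using p prime_gt_0_nat by blast
  define d where "d i = int (w ! i) - int (w' ! i)" for i
  have "(\<Sum>i<p. of_int (d i) * zeta p ^ i)
      = (\<Sum>i<p. of_nat (w ! i) * zeta p ^ i) - (\<Sum>i<p. of_nat (w' ! i) * zeta p ^ i)"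
    by (simp add: d_def left_diff_distrib sum_subtractf)
  also have "\<dots> = 0"
    using comb by simp
  finally have "(\<Sum>i<p. of_int (d i) * zeta p ^ i) = 0" .
  moreover have "zeta p ^ p = 1"
    using zeta_power_eq_1_iff[OF p0, of p] by simp
  moreover have "zeta p \<noteq> 1"
    using zeta_power_eq_1_iff[OF p0, of 1] prime_gt_1_nat[OF p] by simp
  ultimately have d_const: "d i = d 0" if "i < p" for i
    using p that by (intro root_of_unity_int_relation_const[where z = "zeta p"])
  have "sum_list w = (\<Sum>i<p. w ! i)" "sum_list w' = (\<Sum>i<p. w' ! i)"
    using len by (simp_all add: sum_list_sum_nth atLeast0LessThan)
  then have "(\<Sum>i<p. int (w ! i)) = (\<Sum>i<p. int (w' ! i))"
    using sum by (metis of_nat_sum)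
  then have "(\<Sum>i<p. d i) = 0"
    by (simp add: d_def sum_subtractf)
  moreover have "(\<Sum>i<p. d i) = (\<Sum>i<p. d 0)"
    by (rule sum.cong[OF refl], rule d_const) simp
  ultimately have "d 0 = 0"
    using p0 by simp
  then have "w ! i = w' ! i" if "i < p" for i
    using d_const[OF that] unfolding d_def by simp
  then show ?thesis
    using len by (intro nth_equalityI) simp_all
qed

definition trace_counts :: "nat \<Rightarrow> 'a::{field,finite} \<Rightarrow> nat list" where
  "trace_counts s u = map (\<lambda>i. card {x::'a. tr_nat (x ^ s - u * x) = i}) [0..<CHAR('a)]"

lemma length_trace_counts [simp]: "length (trace_counts s (u::'a::{field,finite})) = CHAR('a)"
  by (simp add: trace_counts_def)

lemma nth_trace_counts:
  "i < CHAR('a) \<Longrightarrow> trace_counts s u ! i = card {x::'a::{field,finite}. tr_nat (x ^ s - u * x) = i}"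
  by (simp add: trace_counts_def)

lemma trace_fibres_sum:
  fixes u :: "'a::{field,finite}"
  shows "(\<Sum>x\<in>UNIV. g (tr_nat (x ^ s - u * x)))
    = (\<Sum>i<CHAR('a). of_nat (trace_counts s u ! i) * g i)"
  using tr_nat_less_CHAR
  by (subst sum_comp_eq_sum_card_fibres[where B = "{..<CHAR('a)}"]) (auto simp: nth_trace_counts)

lemma sum_list_trace_counts: "sum_list (trace_counts s (u::'a::{field,finite})) = CARD('a)"
  using trace_fibres_sum[of "\<lambda>_. 1 :: nat" s u]
  by (simp add: sum_list_sum_nth atLeast0LessThan)

lemma Wsum_eq_trace_counts:
  "Wsum s (u::'a::{field,finite}) = (\<Sum>i<CHAR('a). of_nat (trace_counts s u ! i) * zeta CHAR('a) ^ i)"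
  unfolding Wsum_def psi_def by (rule trace_fibres_sum)

lemma trace_counts_0_pos:
  "s > 0 \<Longrightarrow> trace_counts s (u::'a::{field,finite}) ! 0 > 0"
  using CHAR_ge_2_finite_field[where 'a='a] tr_nat_0[where 'a='a]
  by (auto simp: nth_trace_counts card_gt_0_iff power_0_left intro!: exI[of _ 0])

lemma trace_counts_less_card:
  fixes u x0 :: "'a::{field,finite}"
  assumes "s > 0" "tr_nat (x0 ^ s - u * x0) \<noteq> 0" "i < CHAR('a)"
  shows "trace_counts s u ! i < CARD('a)"
proof -
  have "0 \<notin> {x. tr_nat (x ^ s - u * x) = i} \<or> x0 \<notin> {x. tr_nat (x ^ s - u * x) = i}"
    using assms tr_nat_0[where 'a='a] by (auto simp: power_0_left)
  then have "{x. tr_nat (x ^ s - u * x) = i} \<subset> UNIV"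
    by blast
  then show ?thesis
    using assms(3) by (simp add: nth_trace_counts psubset_card_mono)
qed

lemma norm_Wsum_less_card:
  fixes u x0 :: "'a::{field,finite}"
  assumes "s > 0" "tr_nat (x0 ^ s - u * x0) \<noteq> 0"
  shows "cmod (Wsum s u) < CARD('a)"
  unfolding Wsum_def psi_def
proof (rule norm_sum_unit_less_card)
  have "zeta CHAR('a) ^ tr_nat (x0 ^ s - u * x0) \<noteq> 1"
    using assms(2) tr_nat_less_CHAR[of "x0 ^ s - u * x0"] CHAR_ge_2_finite_field[where 'a='a]
    by (auto simp: zeta_power_eq_1_iff dest: dvd_imp_le)
  then show "zeta CHAR('a) ^ tr_nat (0 ^ s - u * 0) \<noteq> zeta CHAR('a) ^ tr_nat (x0 ^ s - u * x0)"
    using assms(1) by (simp add: power_0_left tr_nat_0)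
qed auto

theorem lemma3p2:
  fixes u :: "'a::{field,finite}" and s :: nat
  assumes "s > 0" and "coprime s (CARD('a) - 1)"
  shows "(\<exists>!w :: nat list. length w = CHAR('a) \<and> w ! 0 > 0 \<and> sum_list w = CARD('a) \<and>
            Wsum s u = (\<Sum>i < CHAR('a). of_nat (w ! i) * zeta CHAR('a) ^ i))
         \<and> (\<not> degenerate TYPE('a) s \<longrightarrow>
            (\<forall>w :: nat list. length w = CHAR('a) \<and> w ! 0 > 0 \<and> sum_list w = CARD('a) \<and>
                Wsum s u = (\<Sum>i < CHAR('a). of_nat (w ! i) * zeta CHAR('a) ^ i)
              \<longrightarrow> (\<forall>i < CHAR('a). w ! i < CARD('a)))
            \<and> cmod (Wsum s u) < real CARD('a))"
proof -
  define P where "P w \<longleftrightarrow> length w = CHAR('a) \<and> w ! 0 > 0 \<and> sum_list w = CARD('a) \<and>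
    Wsum s u = (\<Sum>i < CHAR('a). of_nat (w ! i) * zeta CHAR('a) ^ i)" for w
  have counts: "P (trace_counts s u)"
    unfolding P_def using assms(1)
    by (simp add: trace_counts_0_pos sum_list_trace_counts Wsum_eq_trace_counts)
  have unique: "w = trace_counts s u" if "P w" for w
    using that counts unfolding P_def
    by (intro nat_list_eq_if_same_sum_and_zeta_combination[OF CHAR_prime_finite_field]) auto
  have bounds: "(\<forall>w. P w \<longrightarrow> (\<forall>i < CHAR('a). w ! i < CARD('a))) \<and> cmod (Wsum s u) < CARD('a)"
    if nondeg: "\<not> degenerate TYPE('a) s"
  proof -
    obtain x0 :: 'a where x0: "tr_nat (x0 ^ s - u * x0) \<noteq> 0"
      using exists_abs_trace_nonzero[OF assms nondeg] tr_nat_eq_0_iff by blast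
    show ?thesis
      using unique trace_counts_less_card[OF assms(1) x0] norm_Wsum_less_card[OF assms(1) x0]
      by blast
  qed
  have "\<exists>!w. P w"
    using counts unique by blast
  with bounds show ?thesis
    unfolding P_def[symmetric] by blast
qed

end
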